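(* Let $C=c_0c_1\dots c_{m-1}c_0$ and $D=(0)(1)\dots(n-1)(0)$ be reflexive digraph cycles with $D$ non-contractible. The subgraph $\mathrm{Mon}_0(C,D)$ of $\mathrm{Hom}(C,D)$ induced by the monotone homomorphisms of wind $0$ is isomorphic to $D$.
   Context: A digraph is a binary relation $\to$ on a finite vertex set; reflexive means every vertex has a loop. A digraph cycle $C=c_0c_1\dots c_{m-1}c_0$ (indices mod $m$, $m\ge3$) has underlying graph the cycle with edges $c_ic_{i+1}$; $D=(0)(1)\dots(n-1)(0)$ has vertex set the integers mod $n$. $D$ is non-contractible if it has length at least $4$ or is a directed $3$-cycle. A homomorphism $\phi:C\to D$ satisfies $u\to v\Rightarrow\phi(u)\to\phi(v)$. $\mathrm{Hom}(C,D)$ is the digraph whose vertices are the homomorphisms $C\to D$ with $\phi\to\phi'$ iff $\phi(u)\to\phi'(v)$ for all arcs $u\to v$ of $C$. Under $\phi$, edge $c_ic_{i+1}$ is increasing, stationary or decreasing as $\phi(c_{i+1})-\phi(c_i)$ is $1,0,-1$ (mod $n$); the increase of $\phi$ is the number of increasing minus the number of decreasing edges, and the wind is the increase divided by $n$. A homomorphism is monotone if every edge is increasing or stationary, or every edge is decreasing or stationary (so the constant maps are exactly the monotone wind-$0$ maps). *)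

theory Defs
  imports Complex_Main "HOL-Library.FuncSet"
begin

definition refl_dicycle :: "nat \<Rightarrow> (nat \<Rightarrow> nat \<Rightarrow> bool) \<Rightarrow> bool" where
  "refl_dicycle k R \<longleftrightarrow> k \<ge> 3
     \<and> (\<forall>u v. R u v \<longrightarrow> u < k \<and> v < k)
     \<and> (\<forall>u<k. R u u)
     \<and> (\<forall>u<k. \<forall>v<k. u \<noteq> v \<longrightarrow>
           ((R u v \<or> R v u) \<longleftrightarrow> (v = Suc u mod k \<or> u = Suc v mod k)))"

definition directed_3cycle :: "nat \<Rightarrow> (nat \<Rightarrow> nat \<Rightarrow> bool) \<Rightarrow> bool" where
  "directed_3cycle k R \<longleftrightarrow> k = 3 \<and>
     ((\<forall>i<k. R i (Suc i mod k) \<and> \<not> R (Suc i mod k) i) \<or>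
      (\<forall>i<k. R (Suc i mod k) i \<and> \<not> R i (Suc i mod k)))"

definition non_contractible :: "nat \<Rightarrow> (nat \<Rightarrow> nat \<Rightarrow> bool) \<Rightarrow> bool" where
  "non_contractible k R \<longleftrightarrow> k \<ge> 4 \<or> directed_3cycle k R"

definition homs :: "nat \<Rightarrow> (nat \<Rightarrow> nat \<Rightarrow> bool) \<Rightarrow> nat \<Rightarrow> (nat \<Rightarrow> nat \<Rightarrow> bool) \<Rightarrow> (nat \<Rightarrow> nat) set" where
  "homs m C n D = {\<phi> \<in> {0..<m} \<rightarrow>\<^sub>E {0..<n}. \<forall>u<m. \<forall>v<m. C u v \<longrightarrow> D (\<phi> u) (\<phi> v)}"

definition hom_arc :: "nat \<Rightarrow> (nat \<Rightarrow> nat \<Rightarrow> bool) \<Rightarrow> (nat \<Rightarrow> nat \<Rightarrow> bool) \<Rightarrow> (nat \<Rightarrow> nat) \<Rightarrow> (nat \<Rightarrow> nat) \<Rightarrow> bool" where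
  "hom_arc m C D \<phi> \<psi> \<longleftrightarrow> (\<forall>u<m. \<forall>v<m. C u v \<longrightarrow> D (\<phi> u) (\<psi> v))"

definition edge_increasing :: "nat \<Rightarrow> nat \<Rightarrow> (nat \<Rightarrow> nat) \<Rightarrow> nat \<Rightarrow> bool" where
  "edge_increasing m n \<phi> i \<longleftrightarrow> (int (\<phi> (Suc i mod m)) - int (\<phi> i)) mod int n = 1 mod int n"

definition edge_stationary :: "nat \<Rightarrow> nat \<Rightarrow> (nat \<Rightarrow> nat) \<Rightarrow> nat \<Rightarrow> bool" where
  "edge_stationary m n \<phi> i \<longleftrightarrow> (int (\<phi> (Suc i mod m)) - int (\<phi> i)) mod int n = 0"

definition edge_decreasing :: "nat \<Rightarrow> nat \<Rightarrow> (nat \<Rightarrow> nat) \<Rightarrow> nat \<Rightarrow> bool" where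
  "edge_decreasing m n \<phi> i \<longleftrightarrow> (int (\<phi> (Suc i mod m)) - int (\<phi> i)) mod int n = (-1) mod int n"

definition increase :: "nat \<Rightarrow> nat \<Rightarrow> (nat \<Rightarrow> nat) \<Rightarrow> int" where
  "increase m n \<phi> = int (card {i. i < m \<and> edge_increasing m n \<phi> i})
                    - int (card {i. i < m \<and> edge_decreasing m n \<phi> i})"

definition wind :: "nat \<Rightarrow> nat \<Rightarrow> (nat \<Rightarrow> nat) \<Rightarrow> real" where
  "wind m n \<phi> = real_of_int (increase m n \<phi>) / real n"

definition monotone_hom :: "nat \<Rightarrow> nat \<Rightarrow> (nat \<Rightarrow> nat) \<Rightarrow> bool" where
  "monotone_hom m n \<phi> \<longleftrightarrow>
     (\<forall>i<m. edge_increasing m n \<phi> i \<or> edge_stationary m n \<phi> i) \<or>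
     (\<forall>i<m. edge_decreasing m n \<phi> i \<or> edge_stationary m n \<phi> i)"

definition Mon0 :: "nat \<Rightarrow> (nat \<Rightarrow> nat \<Rightarrow> bool) \<Rightarrow> nat \<Rightarrow> (nat \<Rightarrow> nat \<Rightarrow> bool) \<Rightarrow> (nat \<Rightarrow> nat) set" where
  "Mon0 m C n D = {\<phi> \<in> homs m C n D. monotone_hom m n \<phi> \<and> wind m n \<phi> = 0}"

end

theory Submission
  imports Defs
begin

text \<open>A monotone homomorphism has edges of only one non-stationary kind, so wind 0 forces
  it to have none: every edge is stationary and the homomorphism is constant. Constant maps
  correspond to the vertices of \<open>D\<close>, and since \<open>C\<close> has a loop, two constant maps are
  adjacent in \<open>Hom(C,D)\<close> exactly when their values are adjacent in \<open>D\<close>.\<close>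

lemma diff_mod_eq_0_imp_eq:
  fixes a b n :: nat
  assumes "a < n" "b < n" "(int a - int b) mod int n = 0"
  shows "a = b"
proof -
  have "int a mod int n = int b mod int n"
    using assms(3) by (simp add: mod_eq_dvd_iff mod_eq_0_iff_dvd)
  then show ?thesis using assms(1,2) by simp
qed

lemma edge_kinds_exclusive:
  assumes "n \<ge> 3"
  shows "\<not> (edge_increasing m n \<phi> i \<and> edge_stationary m n \<phi> i)"
    and "\<not> (edge_decreasing m n \<phi> i \<and> edge_stationary m n \<phi> i)"
    and "\<not> (edge_increasing m n \<phi> i \<and> edge_decreasing m n \<phi> i)"
  using assms zmod_minus1[of "int n"]
  unfolding edge_increasing_def edge_stationary_def edge_decreasing_def by auto

lemma monotone_wind_0_imp_stationary:
  assumes "n \<ge> 3" "monotone_hom m n \<phi>" "wind m n \<phi> = 0" "i < m"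
  shows "edge_stationary m n \<phi> i"
proof -
  let ?I = "{i. i < m \<and> edge_increasing m n \<phi> i}"
  let ?D = "{i. i < m \<and> edge_decreasing m n \<phi> i}"
  have "card ?I = card ?D"
    using assms(1,3) by (simp add: wind_def increase_def)
  moreover have "?I = {} \<or> ?D = {}"
    using assms(2) edge_kinds_exclusive[OF assms(1)] unfolding monotone_hom_def by blast
  moreover have "finite ?I" "finite ?D" by simp_all
  ultimately have "?I = {} \<and> ?D = {}" by (metis card_0_eq)
  then show ?thesis using assms(2,4) unfolding monotone_hom_def by blast
qed

lemma stationary_imp_constant:
  assumes "\<phi> \<in> {0..<m} \<rightarrow> {0..<n}" "\<forall>i<m. edge_stationary m n \<phi> i" "i < m"
  shows "\<phi> i = \<phi> 0"
  using assms(3)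
proof (induction i)
  case 0
  then show ?case by simp
next
  case (Suc i)
  have "edge_stationary m n \<phi> i" using assms(2) Suc.prems by simp
  then have "(int (\<phi> (Suc i)) - int (\<phi> i)) mod int n = 0"
    using Suc.prems unfolding edge_stationary_def by simp
  then have "\<phi> (Suc i) = \<phi> i"
    using assms(1) Suc.prems by (intro diff_mod_eq_0_imp_eq) auto
  then show ?case using Suc by simp
qed

lemma Mon0_eq_constants:
  assumes "refl_dicycle m C" "refl_dicycle n D"
  shows "Mon0 m C n D = (\<lambda>c. restrict (\<lambda>_. c) {0..<m}) ` {0..<n}"
proof
  have m3: "m \<ge> 3" and n3: "n \<ge> 3" and D_refl: "\<forall>c<n. D c c"
    using assms unfolding refl_dicycle_def by auto
  show "Mon0 m C n D \<subseteq> (\<lambda>c. restrict (\<lambda>_. c) {0..<m}) ` {0..<n}"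
  proof
    fix \<phi> assume "\<phi> \<in> Mon0 m C n D"
    then have \<phi>: "\<phi> \<in> {0..<m} \<rightarrow>\<^sub>E {0..<n}" "monotone_hom m n \<phi>" "wind m n \<phi> = 0"
      unfolding Mon0_def homs_def by auto
    have "\<forall>i<m. edge_stationary m n \<phi> i"
      using monotone_wind_0_imp_stationary[OF n3 \<phi>(2,3)] by blast
    then have "\<forall>i<m. \<phi> i = \<phi> 0"
      using stationary_imp_constant \<phi>(1) PiE_iff by blast
    then have "\<phi> = restrict (\<lambda>_. \<phi> 0) {0..<m}"
      using PiE_restrict[OF \<phi>(1)] by (metis atLeastLessThan_iff restrict_ext)
    moreover have "\<phi> 0 \<in> {0..<n}" using \<phi>(1) m3 by auto
    ultimately show "\<phi> \<in> (\<lambda>c. restrict (\<lambda>_. c) {0..<m}) ` {0..<n}" by blast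
  qed
  show "(\<lambda>c. restrict (\<lambda>_. c) {0..<m}) ` {0..<n} \<subseteq> Mon0 m C n D"
  proof
    fix \<phi> assume "\<phi> \<in> (\<lambda>c. restrict (\<lambda>_. c) {0..<m}) ` {0..<n}"
    then obtain c where c: "c < n" and \<phi>_def: "\<phi> = restrict (\<lambda>_. c) {0..<m}" by auto
    have hom: "\<phi> \<in> homs m C n D"
      using c D_refl unfolding \<phi>_def homs_def by auto
    have stationary: "\<forall>i<m. edge_stationary m n \<phi> i"
      using m3 unfolding \<phi>_def edge_stationary_def by simp
    then have no_inc: "{i. i < m \<and> edge_increasing m n \<phi> i} = {}"
      and no_dec: "{i. i < m \<and> edge_decreasing m n \<phi> i} = {}"
      using edge_kinds_exclusive[OF n3] by blast+
    have "wind m n \<phi> = 0" unfolding wind_def increase_def no_inc no_dec by simp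
    with hom stationary show "\<phi> \<in> Mon0 m C n D"
      unfolding Mon0_def monotone_hom_def by simp
  qed
qed

lemma hom_arc_constants_iff:
  assumes "u < m" "v < m" "C u v"
  shows "hom_arc m C D (restrict (\<lambda>_. a) {0..<m}) (restrict (\<lambda>_. b) {0..<m}) \<longleftrightarrow> D a b"
  using assms unfolding hom_arc_def by auto

theorem fact3p1:
  fixes m n :: nat and C D :: "nat \<Rightarrow> nat \<Rightarrow> bool"
  assumes "refl_dicycle m C" and "refl_dicycle n D" and "non_contractible n D"
  shows "\<exists>f. bij_betw f (Mon0 m C n D) {0..<n} \<and>
           (\<forall>\<phi>\<in>Mon0 m C n D. \<forall>\<psi>\<in>Mon0 m C n D. hom_arc m C D \<phi> \<psi> \<longleftrightarrow> D (f \<phi>) (f \<psi>))"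
proof -
  let ?const = "\<lambda>c. restrict (\<lambda>_. c) {0..<m}"
  have m0: "0 < m" and C00: "C 0 0"
    using assms(1) unfolding refl_dicycle_def by auto
  have Mon0: "Mon0 m C n D = ?const ` {0..<n}"
    using Mon0_eq_constants[OF assms(1,2)] .
  have "bij_betw (\<lambda>\<phi>. \<phi> 0) (Mon0 m C n D) {0..<n}"
    unfolding Mon0 by (rule bij_betw_byWitness[where f' = ?const]) (use m0 in auto)
  moreover have "hom_arc m C D \<phi> \<psi> \<longleftrightarrow> D (\<phi> 0) (\<psi> 0)"
    if "\<phi> \<in> Mon0 m C n D" "\<psi> \<in> Mon0 m C n D" for \<phi> \<psi>
    using that m0 hom_arc_constants_iff[of 0 m 0 C, OF m0 m0 C00] unfolding Mon0 by auto
  ultimately show ?thesis by blast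
qed

end
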